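(* For every $n\ge 0$ and $i\in\{0,1\}$, the function $x\mapsto v_n(x,i)$ is nonincreasing on $\{0,1,2,\dots\}$; equivalently $\Delta_n(x,i)\ge 0$ for all $x\ge 0$.
   Context: Parameters: $\lambda>0$, $0<\mu_l<\mu_h$, $\delta=\mu_h-\mu_l$, $R\ge 0$, $c>0$, and $h:\{0,1,2,\dots\}\to\mathbb{R}$ nondecreasing and convex with $h(0)=0$; the rates are normalized so that $\lambda+\mu_h+\beta=1$ for a discount rate $\beta>0$. Finite-horizon value functions on $S=\{0,1,2,\dots\}\times\{0,1\}$: $v_0\equiv 0$ and for $n\ge 0$: $v_{n+1}(0,0)=\lambda v_n(0,1)+\mu_h v_n(0,0)$; $v_{n+1}(x,0)=-h(x)+\lambda v_n(x,1)+\mu_l v_n(x-1,0)+\max\{\delta v_n(x,0),-c+\delta v_n(x-1,0)\}$ for $x\ge1$; $v_{n+1}(x,1)=\max\{R+v_{n+1}(x+1,0),v_{n+1}(x,0)\}$ for $x\ge 0$. Define $\Delta_n(x,i)=v_n(x,i)-v_n(x+1,i)$. *)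

theory Defs
  imports Complex_Main
begin

fun vfun :: "real \<Rightarrow> real \<Rightarrow> real \<Rightarrow> real \<Rightarrow> real \<Rightarrow> (nat \<Rightarrow> real) \<Rightarrow> nat
             \<Rightarrow> (nat \<Rightarrow> real) \<times> (nat \<Rightarrow> real)" where
  "vfun lam muh mul c R h 0 = ((\<lambda>x. 0), (\<lambda>x. 0))"
| "vfun lam muh mul c R h (Suc n) =
     (let (v0, v1) = vfun lam muh mul c R h n;
          w0 = (\<lambda>x. if x = 0 then lam * v1 0 + muh * v0 0
                    else - h x + lam * v1 x + mul * v0 (x - 1)
                         + max ((muh - mul) * v0 x) (- c + (muh - mul) * v0 (x - 1)))
      in (w0, (\<lambda>x. max (R + w0 (x + 1)) (w0 x))))"

definition v :: "real \<Rightarrow> real \<Rightarrow> real \<Rightarrow> real \<Rightarrow> real \<Rightarrow> (nat \<Rightarrow> real) \<Rightarrow> nat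
             \<Rightarrow> nat \<Rightarrow> nat \<Rightarrow> real" where
  "v lam muh mul c R h n x i = (if i = 0 then fst (vfun lam muh mul c R h n) x
                                 else snd (vfun lam muh mul c R h n) x)"

end

theory Submission
  imports Defs
begin

text \<open>
  We show separately that
  (1) phase0_update maps nonincreasing pairs to a nonincreasing function
      (the holding cost h is nondecreasing and nonnegative, all rates are
      nonnegative and the switching cost c is nonnegative), and
  (2) the admission operator preserves nonincreasing functions.
\<close>

definition phase0_update ::
    "real \<Rightarrow> real \<Rightarrow> real \<Rightarrow> real \<Rightarrow> (nat \<Rightarrow> real) \<Rightarrow> (nat \<Rightarrow> real) \<Rightarrow> (nat \<Rightarrow> real)
     \<Rightarrow> nat \<Rightarrow> real" where
  "phase0_update lam muh mul c h v0 v1 =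
     (\<lambda>x. if x = 0 then lam * v1 0 + muh * v0 0
          else - h x + lam * v1 x + mul * v0 (x - 1)
               + max ((muh - mul) * v0 x) (- c + (muh - mul) * v0 (x - 1)))"

text \<open>The admission decision taken in phase 1: accept (reward R, one more job) or reject.\<close>
definition admit :: "real \<Rightarrow> (nat \<Rightarrow> real) \<Rightarrow> nat \<Rightarrow> real" where
  "admit R w = (\<lambda>x. max (R + w (x + 1)) (w x))"

lemma vfun_Suc:
  "vfun lam muh mul c R h (Suc n) =
     (let w0 = phase0_update lam muh mul c h (fst (vfun lam muh mul c R h n))
                             (snd (vfun lam muh mul c R h n))
      in (w0, admit R w0))"
  by (cases "vfun lam muh mul c R h n") (simp add: phase0_update_def admit_def)

lemma decseq_scaled_step:
  fixes f :: "nat \<Rightarrow> real"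
  assumes "decseq f" and "0 \<le> a"
  shows "a * f (Suc x) \<le> a * f x"
  using assms by (simp add: decseq_Suc_iff mult_left_mono)

text \<open>At x = 0 the
  server has nothing to do, and the loss of the holding cost h 1 \<ge> 0 together
  with the switching option (cost c \<ge> 0) dominates the change; for x > 0 every
  term is nonincreasing termwise.\<close>
lemma decseq_phase0_update:
  fixes v0 v1 :: "nat \<Rightarrow> real"
  assumes lam: "0 \<le> lam" and mul: "0 \<le> mul" and mu: "mul \<le> muh" and c: "0 \<le> c"
    and h: "mono h" "0 \<le> h 0"
    and v0: "decseq v0" and v1: "decseq v1"
  shows "decseq (phase0_update lam muh mul c h v0 v1)"
  unfolding decseq_Suc_iff
proof
  fix x
  let ?w = "phase0_update lam muh mul c h v0 v1"
  have d: "0 \<le> muh - mul" using mu by simp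
  show "?w (Suc x) \<le> ?w x"
  proof (cases x)
    case 0
    have "0 \<le> h 1" using h by (metis monoD zero_le_one order_trans)
    moreover have "lam * v1 1 \<le> lam * v1 0"
      using decseq_scaled_step[OF v1 lam, of 0] by simp
    moreover have "(muh - mul) * v0 1 \<le> (muh - mul) * v0 0"
      using decseq_scaled_step[OF v0 d, of 0] by simp
    ultimately show ?thesis
      using 0 c by (simp add: phase0_update_def max_def algebra_simps)
  next
    case (Suc y)
    have "h (Suc y) \<le> h (Suc (Suc y))" using h by (simp add: monoD)
    moreover have "lam * v1 (Suc (Suc y)) \<le> lam * v1 (Suc y)"
      using decseq_scaled_step[OF v1 lam] .
    moreover have "mul * v0 (Suc y) \<le> mul * v0 y"
      using decseq_scaled_step[OF v0 mul] .
    moreover have "(muh - mul) * v0 (Suc (Suc y)) \<le> (muh - mul) * v0 (Suc y)"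
      and "(muh - mul) * v0 (Suc y) \<le> (muh - mul) * v0 y"
      using decseq_scaled_step[OF v0 d] by auto
    ultimately show ?thesis
      using Suc by (simp add: phase0_update_def max_def)
  qed
qed

lemma decseq_admit:
  fixes w :: "nat \<Rightarrow> real"
  assumes "decseq w"
  shows "decseq (admit R w)"
  using assms unfolding decseq_Suc_iff admit_def
  by (metis Suc_eq_plus1 add_le_cancel_left max.mono)

lemma decseq_vfun:
  assumes "0 \<le> lam" "0 \<le> mul" "mul \<le> muh" "0 \<le> c" "mono h" "0 \<le> h 0"
  shows "decseq (fst (vfun lam muh mul c R h n)) \<and> decseq (snd (vfun lam muh mul c R h n))"
proof (induction n)
  case 0
  show ?case by (simp add: decseq_def)
next
  case (Suc n)
  then have "decseq (phase0_update lam muh mul c h (fst (vfun lam muh mul c R h n))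
                                   (snd (vfun lam muh mul c R h n)))"
    using decseq_phase0_update assms by blast
  then show ?case
    unfolding vfun_Suc Let_def fst_conv snd_conv using decseq_admit by blast
qed

theorem lemma1:
  fixes lam muh mul c R beta :: real and h :: "nat \<Rightarrow> real"
  assumes "lam > 0" and "0 < mul" and "mul < muh" and "R \<ge> 0" and "c > 0"
    and "beta > 0" and "lam + muh + beta = 1"
    and "mono h" and "\<And>x. h (x + 2) - h (x + 1) \<ge> h (x + 1) - h x" and "h 0 = 0"
    and "i \<in> {0, 1}"
  shows "v lam muh mul c R h n (x + 1) i \<le> v lam muh mul c R h n x i"
proof -
  have "decseq (fst (vfun lam muh mul c R h n)) \<and> decseq (snd (vfun lam muh mul c R h n))"
    using assms by (intro decseq_vfun) auto
  then show ?thesis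
    by (simp add: v_def decseq_Suc_iff)
qed

end
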